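(* Let $G_0^*$ be a $(k,r_0)$-regular hypergraph with vertices $v_1,\dots,v_n$, and list the eigenvalues of $S(G_0^* )$ with multiplicity as $\mu_1^{(0)}=n-1-2r_0(k-1),\mu_2^{(0)},\dots,\mu_n^{(0)}$. For $j=1,\dots,n$ let $G_j^*$ be a $(k,r)$-regular hypergraph on $m\ge2$ vertices, and list the eigenvalues of $S(G_j^* )$ with multiplicity as $\mu_1^{(j)}=m-1-2r(k-1),\mu_2^{(j)},\dots,\mu_m^{(j)}$. Let $G^*=G_0^*\odot_1^n G_i^*$ be the generalized corona with $p=1$, $t=n$ and $U_i=\{v_i\}$. Put $b=\binom{m-1}{k-2}$, $c=\binom{m-1}{k-2}-\binom{m-2}{k-2}$ and $h=h(\mu)=-(1+2r(k-1)+2c(m-1)+\mu)$. Then for every real $\mu$, $$P_{S(G^* )}(\mu)=\Big((\mu_1^{(0)}-\mu)(h+mn)+4bm(n-b)-mn^2\Big)\prod_{i=2}^n\Big(\mu_i^{(0)}h-4mb^2-\mu h\Big)\prod_{j=1}^n\prod_{i=2}^m\Big(\mu_i^{(j)}+2c-\mu\Big).$$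
   Context: All hypergraphs are finite and simple: a hypergraph $G^*=(V,E)$ consists of a finite vertex set $V$ and a set $E$ of subsets of $V$ (hyperedges), each of size at least $2$. It is $k$-uniform if every hyperedge has exactly $k$ elements, and $(k,r)$-regular if it is $k$-uniform and every vertex lies in exactly $r$ hyperedges. For a hypergraph with vertices $v_1,\dots,v_n$, the adjacency matrix $A(G^* )$ is the $n\times n$ matrix whose $(i,j)$ entry, for $i\ne j$, is the number of hyperedges containing both $v_i$ and $v_j$, and whose diagonal entries are $0$; the Seidel matrix is $S(G^* )=J_n-I_n-2A(G^* )$, where $J_n$ is the all-ones matrix and $I_n$ the identity. For a square matrix $M$, $P_M(\mu)=\det(M-\mu I)$. Binomial coefficients $\binom{x}{y}$ with integers $x\ge 0$ and $y$ are $0$ when $y<0$ or $y>x$. Generalized corona: let $G_0^*$ be a $k$-uniform hypergraph with vertex set $V_0$, $\{U_1,\dots,U_t\}$ a partition of $V_0$ with $|U_i|=p$, and $G_1^*,\dots,G_t^*$ $k$-uniform hypergraphs. The generalized corona $G_0^*\odot_p^t G_i^*$ is the $k$-uniform hypergraph obtained as follows: for each $i$ take $p$ copies $G_i^{*(1)},\dots,G_i^{*(p)}$ of $G_i^*$, all copies pairwise vertex-disjoint and disjoint from $V_0$. The vertex set is $V_0$ together with the vertices of all copies; the hyperedges are the hyperedges of $G_0^*$, the hyperedges of every copy, and, for every $i\in\{1,\dots,t\}$ and $j\in\{1,\dots,p\}$, every $k$-element subset of $U_i\cup V(G_i^{*(j)})$ that meets both $U_i$ and $V(G_i^{*(j)})$.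 *)

theory Defs
  imports "Jordan_Normal_Form.Determinant"
begin

definition hypergraph :: "'a set \<Rightarrow> 'a set set \<Rightarrow> bool" where
  "hypergraph V E \<longleftrightarrow> finite V \<and> (\<forall>e\<in>E. e \<subseteq> V \<and> card e \<ge> 2)"

definition k_uniform :: "nat \<Rightarrow> 'a set \<Rightarrow> 'a set set \<Rightarrow> bool" where
  "k_uniform k V E \<longleftrightarrow> hypergraph V E \<and> (\<forall>e\<in>E. card e = k)"

definition kr_regular :: "nat \<Rightarrow> nat \<Rightarrow> 'a set \<Rightarrow> 'a set set \<Rightarrow> bool" where
  "kr_regular k r V E \<longleftrightarrow> k_uniform k V E \<and> (\<forall>v\<in>V. card {e\<in>E. v \<in> e} = r)"

definition adj_mat :: "'a set set \<Rightarrow> 'a list \<Rightarrow> real mat" where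
  "adj_mat E vs = mat (length vs) (length vs)
     (\<lambda>(i,j). if i = j then 0 else real (card {e\<in>E. vs!i \<in> e \<and> vs!j \<in> e}))"

definition seidel_mat :: "'a set set \<Rightarrow> 'a list \<Rightarrow> real mat" where
  "seidel_mat E vs = mat (length vs) (length vs) (\<lambda>_. 1) - 1\<^sub>m (length vs)
     - 2 \<cdot>\<^sub>m adj_mat E vs"

definition charP :: "real mat \<Rightarrow> real \<Rightarrow> real" where
  "charP M \<mu> = det (M - \<mu> \<cdot>\<^sub>m 1\<^sub>m (dim_row M))"

text \<open>Generalized corona G0 (.)_p^t G_i: parts U i (i=1..t), copies (i,j), j=1..p,
  the copy (i,j) of G_i has vertices Inr (i,j,x) for x in VG i.\<close>
definition corona_copy :: "nat \<Rightarrow> nat \<Rightarrow> 'b set \<Rightarrow> ('a + nat \<times> nat \<times> 'b) set" where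
  "corona_copy i j W = (\<lambda>x. Inr (i,j,x)) ` W"

definition gen_corona_V ::
  "'a set \<Rightarrow> nat \<Rightarrow> nat \<Rightarrow> (nat \<Rightarrow> 'b set) \<Rightarrow> ('a + nat \<times> nat \<times> 'b) set" where
  "gen_corona_V V0 t p VG = Inl ` V0 \<union> (\<Union>i\<in>{1..t}. \<Union>j\<in>{1..p}. corona_copy i j (VG i))"

definition gen_corona_E ::
  "nat \<Rightarrow> 'a set set \<Rightarrow> nat \<Rightarrow> nat \<Rightarrow> (nat \<Rightarrow> 'a set) \<Rightarrow> (nat \<Rightarrow> 'b set)
     \<Rightarrow> (nat \<Rightarrow> 'b set set) \<Rightarrow> ('a + nat \<times> nat \<times> 'b) set set" where
  "gen_corona_E k E0 t p U VG EG =
     (image Inl) ` E0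
   \<union> (\<Union>i\<in>{1..t}. \<Union>j\<in>{1..p}. (image (\<lambda>x. Inr (i,j,x))) ` EG i)
   \<union> (\<Union>i\<in>{1..t}. \<Union>j\<in>{1..p}.
        {e. e \<subseteq> Inl ` U i \<union> corona_copy i j (VG i) \<and> card e = k
            \<and> e \<inter> Inl ` U i \<noteq> {} \<and> e \<inter> corona_copy i j (VG i) \<noteq> {}})"

end

(*
  List the vertices of the corona as the hubs v_1, ..., v_n followed by the pendant copies of
  G_1, ..., G_n. The Seidel matrix then consists of S(G_0), a hub-pendant block that is constant
  on each pendant, its transpose, and a pendant block equal to J plus the block-diagonal matrix
  with blocks S(G_j) + 2c I - (2c + 1) J, all of which have constant row sums. Adding suitable
  multiples of the column sums of the pendant blocks to the hub columns clears the lower-left block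
  and turns the hub block into S(G_0) - \<nu> I + s J. Every determinant that remains has the form
  det (A - x I + t J) with A of constant row sum r, which is (r - x + t dim A) times the
  characteristic polynomial of A at x with the factor of the eigenvalue r removed. This proves
  the formula for all but finitely many \<mu>, and continuity in \<mu> gives it everywhere.
*)

theory Submission
  imports Defs "Jordan_Normal_Form.Char_Poly"
begin

section \<open>Determinants of structured matrices\<close>

lemma det_unit_lower_triangular:
  fixes A :: "'a :: comm_ring_1 mat"
  assumes "A \<in> carrier_mat n n"
    and "\<And>i j. i < j \<Longrightarrow> j < n \<Longrightarrow> A $$ (i,j) = 0" and "\<And>i. i < n \<Longrightarrow> A $$ (i,i) = 1"
  shows "det A = 1"
proof -
  have "diag_mat A = map (\<lambda>_. 1) [0..<n]"
    using assms by (simp add: diag_mat_def)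
  then show ?thesis
    using assms by (simp add: det_lower_triangular[of n] map_replicate_const)
qed

lemma det_const_row_sums:
  fixes Y :: "'a :: comm_ring_1 mat"
  assumes Y: "Y \<in> carrier_mat (Suc n) (Suc n)"
    and row_sum: "\<And>i. i < Suc n \<Longrightarrow> (\<Sum>j<Suc n. Y $$ (i,j)) = \<rho>"
  shows "det Y = \<rho> * det (mat n n (\<lambda>(i,j). Y $$ (Suc i, Suc j) - Y $$ (0, Suc j)))"
proof -
  \<comment> \<open>Add all columns to the first one, then subtract the first row from all others.\<close>
  define U :: "'a mat" where "U = mat (Suc n) (Suc n) (\<lambda>(i,j). if j = 0 \<or> i = j then 1 else 0)"
  define L :: "'a mat" where "L = mat (Suc n) (Suc n) (\<lambda>(i,j). if i = j then 1 else if j = 0 then -1 else 0)"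
  define Z where "Z = L * (Y * U)"
  have U: "U \<in> carrier_mat (Suc n) (Suc n)" and L: "L \<in> carrier_mat (Suc n) (Suc n)"
    by (simp_all add: U_def L_def)
  have Z: "Z \<in> carrier_mat (Suc n) (Suc n)"
    using Y U L by (simp add: Z_def)
  have "det U = 1" "det L = 1"
    by (rule det_unit_lower_triangular, auto simp: U_def L_def)+
  then have detZ: "det Z = det Y"
    using Y U L by (simp add: Z_def det_mult[of _ "Suc n"])
  have YU_index: "(Y * U) $$ (i,j) = (if j = 0 then \<rho> else Y $$ (i,j))" if "i < Suc n" "j < Suc n" for i j
  proof -
    have "(Y * U) $$ (i,j) = (\<Sum>k<Suc n. Y $$ (i,k) * U $$ (k,j))"
      using that Y U by (simp add: scalar_prod_def lessThan_atLeast0)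
    also have "\<dots> = (if j = 0 then \<rho> else Y $$ (i,j))"
      using that row_sum by (auto simp: U_def if_distrib cong: if_cong)
    finally show ?thesis .
  qed
  have Z_index: "Z $$ (i,j) = (if i = 0 then (Y * U) $$ (0,j) else (Y * U) $$ (i,j) - (Y * U) $$ (0,j))"
    if "i < Suc n" "j < Suc n" for i j
  proof -
    have "Z $$ (i,j) = (\<Sum>k<Suc n. L $$ (i,k) * (Y * U) $$ (k,j))"
      using that Y U L by (simp add: Z_def scalar_prod_def lessThan_atLeast0)
    also have "\<dots> = (\<Sum>k<Suc n. (if k = i then (Y * U) $$ (k,j) else 0)
        - (if k = 0 \<and> i \<noteq> 0 then (Y * U) $$ (k,j) else 0))"
      using that by (intro sum.cong) (auto simp: L_def)
    also have "\<dots> = (if i = 0 then (Y * U) $$ (0,j) else (Y * U) $$ (i,j) - (Y * U) $$ (0,j))"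
      using that by (simp add: sum_subtractf)
    finally show ?thesis .
  qed
  have col0: "Z $$ (i,0) = (if i = 0 then \<rho> else 0)" if "i < Suc n" for i
    using that by (simp add: Z_index YU_index)
  have minor: "mat_delete Z 0 0 = mat n n (\<lambda>(i,j). Y $$ (Suc i, Suc j) - Y $$ (0, Suc j))"
    using Z by (intro eq_matI) (auto simp: mat_delete_def Z_index YU_index)
  have "det Z = (\<Sum>i<Suc n. Z $$ (i,0) * cofactor Z i 0)"
    by (rule laplace_expansion_column[OF Z]) simp
  also have "\<dots> = (\<Sum>i<Suc n. if i = 0 then \<rho> * cofactor Z 0 0 else 0)"
    by (intro sum.cong) (auto simp: col0)
  also have "\<dots> = \<rho> * cofactor Z 0 0"
    by (simp only: sum.delta finite_lessThan) simp
  finally show ?thesis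
    using detZ minor by (simp add: cofactor_def)
qed

lemma det_add_const:
  fixes A :: "'a :: comm_ring_1 mat"
  assumes A: "A \<in> carrier_mat n n"
    and row_sum: "\<And>i. i < n \<Longrightarrow> (\<Sum>j<n. A $$ (i,j)) = l"
  shows "l * det (A + t \<cdot>\<^sub>m mat n n (\<lambda>_. 1)) = det A * (l + t * of_nat n)"
proof (cases n)
  case 0
  then show ?thesis using A by simp
next
  case (Suc n')
  define X where "X = A + t \<cdot>\<^sub>m mat n n (\<lambda>_. 1)"
  have X: "X \<in> carrier_mat n n" using A by (simp add: X_def)
  have X_sum: "(\<Sum>j<n. X $$ (i,j)) = l + t * of_nat n" if "i < n" for i
    using that A row_sum by (simp add: X_def sum.distrib mult.commute)
  have "mat n' n' (\<lambda>(i,j). X $$ (Suc i, Suc j) - X $$ (0, Suc j))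
      = mat n' n' (\<lambda>(i,j). A $$ (Suc i, Suc j) - A $$ (0, Suc j))"
    using A Suc by (intro eq_matI) (auto simp: X_def)
  then show ?thesis
    using det_const_row_sums[of X n' "l + t * of_nat n"] det_const_row_sums[of A n' l]
      A X X_sum row_sum Suc by (simp add: X_def mult_ac)
qed

lemma det_shift_add_const:
  fixes A :: "real mat" and ev :: "nat \<Rightarrow> real"
  assumes A: "A \<in> carrier_mat n n"
    and row_sum: "\<And>i. i < n \<Longrightarrow> (\<Sum>j<n. A $$ (i,j)) = v"
    and eig: "\<And>x. charP A x = (\<Prod>i=1..n. ev i - x)" and eig1: "ev 1 = v"
    and n: "1 \<le> n" and \<nu>: "\<nu> \<noteq> v"
  shows "det (A - \<nu> \<cdot>\<^sub>m 1\<^sub>m n + t \<cdot>\<^sub>m mat n n (\<lambda>_. 1)) = (v - \<nu> + t * real n) * (\<Prod>i=2..n. ev i - \<nu>)"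
proof -
  have A': "A - \<nu> \<cdot>\<^sub>m 1\<^sub>m n \<in> carrier_mat n n"
    by (simp add: minus_carrier_mat)
  have "(\<Sum>j<n. (A - \<nu> \<cdot>\<^sub>m 1\<^sub>m n) $$ (i,j)) = v - \<nu>" if i: "i < n" for i
  proof -
    have "(\<Sum>j<n. (A - \<nu> \<cdot>\<^sub>m 1\<^sub>m n) $$ (i,j)) = (\<Sum>j<n. A $$ (i,j) - (if j = i then \<nu> else 0))"
      using A i by (intro sum.cong) auto
    then show ?thesis using row_sum[OF i] i by (simp add: sum_subtractf)
  qed
  then have "(v - \<nu>) * det (A - \<nu> \<cdot>\<^sub>m 1\<^sub>m n + t \<cdot>\<^sub>m mat n n (\<lambda>_. 1))
      = det (A - \<nu> \<cdot>\<^sub>m 1\<^sub>m n) * (v - \<nu> + t * real n)"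
    by (rule det_add_const[OF A'])
  also have "det (A - \<nu> \<cdot>\<^sub>m 1\<^sub>m n) = (v - \<nu>) * (\<Prod>i=2..n. ev i - \<nu>)"
  proof -
    have "(\<Prod>i=1..n. ev i - \<nu>) = (ev 1 - \<nu>) * (\<Prod>i=2..n. ev i - \<nu>)"
      using n by (subst prod.atLeast_Suc_atMost) (simp_all add: numeral_2_eq_2)
    then show ?thesis
      using A eig[of \<nu>] eig1 by (simp add: charP_def)
  qed
  finally show ?thesis
    using \<nu> by simp
qed

lemma det_block_elimination:
  fixes P B C Q G :: "'a :: idom mat"
  assumes P: "P \<in> carrier_mat n n" and B: "B \<in> carrier_mat n k"
    and C: "C \<in> carrier_mat k n" and Q: "Q \<in> carrier_mat k k"
    and G: "G \<in> carrier_mat k n" and elim: "C + Q * G = 0\<^sub>m k n"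
  shows "det (four_block_mat P B C Q) = det (P + B * G) * det Q"
proof -
  define T where "T = four_block_mat (1\<^sub>m n) (0\<^sub>m n k) G (1\<^sub>m k)"
  have T: "T \<in> carrier_mat (n + k) (n + k)" using G by (simp add: T_def)
  have "det T = 1"
    unfolding T_def by (subst det_four_block_mat_upper_right_zero[OF _ refl G]) auto
  have "four_block_mat P B C Q * T = four_block_mat (P + B * G) B (0\<^sub>m k n) Q"
    unfolding T_def using P B C Q G elim
    by (subst mult_four_block_mat[OF P B C Q one_carrier_mat zero_carrier_mat G one_carrier_mat]) simp
  moreover have "det (four_block_mat P B C Q * T) = det (four_block_mat P B C Q) * det T"
    using P B C Q T by (intro det_mult) auto
  moreover have "det (four_block_mat (P + B * G) B (0\<^sub>m k n) Q) = det (P + B * G) * det Q"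
    using P B Q G by (intro det_four_block_mat_lower_left_zero) auto
  ultimately have "det (four_block_mat P B C Q) * det T = det (P + B * G) * det Q"
    by simp
  then show ?thesis using \<open>det T = 1\<close> by simp
qed

lemma four_block_mat_minus_diag:
  fixes A B C D :: "'a :: ring_1 mat"
  assumes "A \<in> carrier_mat n n" "B \<in> carrier_mat n k" "C \<in> carrier_mat k n" "D \<in> carrier_mat k k"
  shows "four_block_mat A B C D - \<mu> \<cdot>\<^sub>m 1\<^sub>m (n + k)
    = four_block_mat (A - \<mu> \<cdot>\<^sub>m 1\<^sub>m n) B C (D - \<mu> \<cdot>\<^sub>m 1\<^sub>m k)"
  using assms by (intro eq_matI) auto

lemma det_permute_rows_cols:
  fixes A :: "'a :: comm_ring_1 mat"
  assumes A: "A \<in> carrier_mat n n" and p: "p permutes {0..<n}"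
  shows "det (mat n n (\<lambda>(i,j). A $$ (p i, p j))) = det A"
proof -
  have p_less: "p i < n" if "i < n" for i
    using p that by (simp add: permutes_in_image)
  define B where "B = mat n n (\<lambda>(i,j). A $$ (i, p j))"
  have B: "B \<in> carrier_mat n n" by (simp add: B_def)
  have "det (mat n n (\<lambda>(i,j). B $$ (p i, j))) = signof p * det B"
    by (rule det_permute_rows[OF B p])
  moreover have "mat n n (\<lambda>(i,j). B $$ (p i, j)) = mat n n (\<lambda>(i,j). A $$ (p i, p j))"
    by (rule eq_matI) (auto simp: B_def p_less)
  moreover have "det B = signof p * det A"
  proof -
    have "det B = det (transpose_mat B)"
      using det_transpose[OF B] by simp
    also have "transpose_mat B = mat n n (\<lambda>(i,j). transpose_mat A $$ (p i, j))"
      using A by (intro eq_matI) (auto simp: B_def p_less)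
    also have "det \<dots> = signof p * det (transpose_mat A)"
      using A by (intro det_permute_rows[OF _ p]) simp
    finally show ?thesis
      using det_transpose[OF A] by simp
  qed
  ultimately have "det (mat n n (\<lambda>(i,j). A $$ (p i, p j))) = (signof p * signof p) * det A"
    by simp
  then show ?thesis
    by (simp flip: of_int_mult)
qed

lemma sum_blocks:
  fixes n m :: nat
  shows "(\<Sum>q<n * m. f q) = (\<Sum>j<n. \<Sum>x<m. f (j * m + x))"
proof -
  have "sum f {a..<a + m} = (\<Sum>x<m. f (a + x))" for a
  proof -
    have "sum f {a..<a + m} = sum f {0 + a..<m + a}" by (simp add: add.commute)
    also have "\<dots> = (\<Sum>x\<in>{0..<m}. f (x + a))" by (rule sum.shift_bounds_nat_ivl)
    finally show ?thesis by (simp add: atLeast0LessThan add.commute)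
  qed
  then show ?thesis by (simp add: sum.nat_group[symmetric, of f n m])
qed

lemma block_index_bounds:
  fixes q n m :: nat
  assumes "q < n * m"
  shows "q div m < n" "q mod m < m"
proof -
  from assms have "0 < m" by (cases "m = 0") auto
  with assms show "q div m < n" "q mod m < m" by (simp_all add: less_mult_imp_div_less)
qed

lemma block_index_less:
  fixes j x n m :: nat
  assumes "j < n" "x < m"
  shows "j * m + x < n * m"
proof -
  have "j * m + x < Suc j * m" using assms by simp
  also have "\<dots> \<le> n * m" using assms by (intro mult_le_mono1) simp
  finally show ?thesis .
qed

lemma eq_iff_same_block: "q = q' \<longleftrightarrow> q div m = q' div m \<and> q mod m = q' mod (m::nat)"
  by (metis div_mult_mod_eq)

lemma index_mult_block_const_mat:
  fixes X :: "'a :: comm_semiring_0 mat"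
  assumes X: "X \<in> carrier_mat r (n * m)" and i: "i < r" and i': "i' < k"
  shows "(X * mat (n * m) k (\<lambda>(q,i'). g (q div m) i')) $$ (i,i')
    = (\<Sum>j<n. g j i' * (\<Sum>x<m. X $$ (i, j * m + x)))"
proof -
  have "(X * mat (n * m) k (\<lambda>(q,i'). g (q div m) i')) $$ (i,i')
      = (\<Sum>q<n * m. X $$ (i,q) * g (q div m) i')"
    using X i i' by (simp add: scalar_prod_def lessThan_atLeast0)
  also have "\<dots> = (\<Sum>j<n. \<Sum>x<m. g j i' * X $$ (i, j * m + x))"
    by (subst sum_blocks) (intro sum.cong refl; simp add: mult.commute)
  finally show ?thesis
    by (simp add: sum_distrib_left)
qed

lemma det_block_diagonal:
  fixes F :: "nat \<Rightarrow> nat \<Rightarrow> nat \<Rightarrow> 'a :: idom"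
  shows "det (mat (n * m) (n * m) (\<lambda>(q,q'). if q div m = q' div m then F (q div m) (q mod m) (q' mod m) else 0))
    = (\<Prod>j<n. det (mat m m (\<lambda>(x,y). F j x y)))"
proof (induction n)
  case (Suc n)
  define f where "f = (\<lambda>(q,q'). if q div m = q' div m then F (q div m) (q mod m) (q' mod m) else 0)"
  have last_block: "q div m = n" "q mod m = q - n * m" if "n * m \<le> q" "q < n * m + m" for q
  proof -
    define x where "x = q - n * m"
    have "q = x + n * m" "x < m"
      using that by (simp_all add: x_def)
    then show "q div m = n" "q mod m = q - n * m"
      by simp_all
  qed
  have "det (mat (Suc n * m) (Suc n * m) f)
      = det (four_block_mat (mat (n * m) (n * m) f) (0\<^sub>m (n * m) m) (0\<^sub>m m (n * m)) (mat m m (\<lambda>(x,y). F n x y)))"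
  proof (rule arg_cong[where f = det], rule eq_matI)
    fix q q' assume "q < dim_row (four_block_mat (mat (n * m) (n * m) f) (0\<^sub>m (n * m) m) (0\<^sub>m m (n * m))
      (mat m m (\<lambda>(x,y). F n x y)))" "q' < dim_col (four_block_mat (mat (n * m) (n * m) f) (0\<^sub>m (n * m) m)
      (0\<^sub>m m (n * m)) (mat m m (\<lambda>(x,y). F n x y)))"
    then have q: "q < n * m + m" and q': "q' < n * m + m" by simp_all
    consider "q < n * m" "q' < n * m" | "q < n * m" "\<not> q' < n * m" | "\<not> q < n * m" "q' < n * m"
      | "\<not> q < n * m" "\<not> q' < n * m" by blast
    then show "mat (Suc n * m) (Suc n * m) f $$ (q,q') = four_block_mat (mat (n * m) (n * m) f)
      (0\<^sub>m (n * m) m) (0\<^sub>m m (n * m)) (mat m m (\<lambda>(x,y). F n x y)) $$ (q,q')"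
    proof cases
      case 2
      then have "q div m < n" "q' div m = n"
        using q' last_block by (simp_all add: less_mult_imp_div_less)
      then show ?thesis using q q' 2 by (simp add: f_def)
    next
      case 3
      then have "q div m = n" "q' div m < n"
        using q last_block by (simp_all add: less_mult_imp_div_less)
      then show ?thesis using q q' 3 by (simp add: f_def)
    qed (use q q' last_block in \<open>simp_all add: f_def\<close>)
  qed simp_all
  also have "\<dots> = det (mat (n * m) (n * m) f) * det (mat m m (\<lambda>(x,y). F n x y))"
    by (rule det_four_block_mat_lower_left_zero) auto
  finally show ?case
    using Suc by (simp add: f_def)
qed simp

section \<open>Continuity of characteristic polynomials\<close>

lemma charP_eq_poly_char_poly:
  fixes A :: "real mat"
  assumes A: "A \<in> carrier_mat n n"
  shows "charP A x = (-1) ^ n * poly (char_poly A) x"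
proof -
  have "- char_matrix A x = (-1) \<cdot>\<^sub>m (A - x \<cdot>\<^sub>m 1\<^sub>m n)"
    using A by (intro eq_matI) (auto simp: char_matrix_def)
  then have "poly (char_poly A) x = (-1) ^ n * charP A x"
    using A by (simp add: char_poly_matrix[OF A] charP_def)
  then show ?thesis
    by (simp flip: power_mult_distrib)
qed

lemma continuous_charP:
  fixes A :: "real mat"
  assumes "A \<in> carrier_mat n n"
  shows "continuous (at x) (charP A)"
proof -
  have "charP A = (\<lambda>x. (-1) ^ n * poly (char_poly A) x)"
    using charP_eq_poly_char_poly[OF assms] by blast
  then show ?thesis
    by (simp add: continuous_intros)
qed

lemma continuous_eq_off_finite:
  fixes f g :: "real \<Rightarrow> real"
  assumes f: "continuous (at x) f" and g: "continuous (at x) g" and S: "finite S"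
    and eq: "\<And>y. y \<notin> S \<Longrightarrow> f y = g y"
  shows "f x = g x"
proof -
  have "\<forall>s\<in>S. eventually (\<lambda>y. y \<noteq> s) (at x)"
    by (simp add: eventually_neq_at_within)
  then have "eventually (\<lambda>y. \<forall>s\<in>S. y \<noteq> s) (at x)"
    by (rule eventually_ball_finite[OF S])
  then have "eventually (\<lambda>y. g y = f y) (at x)"
    by eventually_elim (auto simp: eq)
  with g have "(f \<longlongrightarrow> g x) (at x)"
    unfolding continuous_at by (rule Lim_transform_eventually)
  with f show ?thesis
    unfolding continuous_at by (rule LIM_unique)
qed

lemma finite_roots_quadratic: "finite {y::real. (p - y) * (q - y) = r}"
proof -
  have "{y::real. (p - y) * (q - y) = r} = {y. poly [:p * q - r, - (p + q), 1:] y = 0}"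
    by (auto simp: algebra_simps)
  then show ?thesis
    by (simp only:) (rule poly_roots_finite, simp)
qed

section \<open>The block structure of the Seidel matrix of a corona\<close>

text \<open>The Seidel matrix of a corona, listing the \<open>n\<close> hubs first and then the pendant copies block
  by block (vertex \<open>x\<close> of the copy of the \<open>(j+1)\<close>-th pendant at index \<open>n + j * m + x\<close>).
  \<open>S0\<close> and \<open>S j\<close> are the Seidel matrices of the base and of the pendants, and \<open>b\<close> and \<open>c\<close> count
  the join hyperedges through a hub and one, respectively two, vertices of its pendant.\<close>

definition corona_link :: "nat \<Rightarrow> nat \<Rightarrow> real \<Rightarrow> real mat" where
  "corona_link n m b = mat n (n * m) (\<lambda>(i,q). if q div m = i then 1 - 2 * b else 1)"

definition corona_pendant :: "nat \<Rightarrow> nat \<Rightarrow> real \<Rightarrow> (nat \<Rightarrow> real mat) \<Rightarrow> real mat" where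
  "corona_pendant n m c S = mat (n * m) (n * m) (\<lambda>(q,q').
     if q div m = q' div m then S (q div m) $$ (q mod m, q' mod m) - (if q = q' then 0 else 2 * c)
     else 1)"

definition corona_seidel :: "nat \<Rightarrow> nat \<Rightarrow> real \<Rightarrow> real \<Rightarrow> real mat \<Rightarrow> (nat \<Rightarrow> real mat) \<Rightarrow> real mat" where
  "corona_seidel n m b c S0 S = four_block_mat S0 (corona_link n m b)
     (transpose_mat (corona_link n m b)) (corona_pendant n m c S)"

lemma corona_link_carrier: "corona_link n m b \<in> carrier_mat n (n * m)"
  by (simp add: corona_link_def)

lemma corona_pendant_carrier: "corona_pendant n m c S \<in> carrier_mat (n * m) (n * m)"
  by (simp add: corona_pendant_def)

lemma dim_row_corona_seidel: "dim_row (corona_seidel n m b c S0 S) = dim_row S0 + n * m"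
  by (simp add: corona_seidel_def corona_pendant_def)

lemma corona_seidel_carrier:
  assumes "S0 \<in> carrier_mat n n"
  shows "corona_seidel n m b c S0 S \<in> carrier_mat (n + n * m) (n + n * m)"
  using assms by (simp add: corona_seidel_def corona_pendant_carrier)

lemma corona_link_block_sum:
  assumes "i < n" "j < n"
  shows "(\<Sum>x<m. corona_link n m b $$ (i, j * m + x)) = real m - (if j = i then 2 * b * real m else 0)"
proof -
  have "corona_link n m b $$ (i, j * m + x) = (if j = i then 1 - 2 * b else 1)" if "x < m" for x
    using assms that block_index_less[of j n x m] by (simp add: corona_link_def)
  then show ?thesis by (simp add: algebra_simps)
qed

lemma index_corona_link_mult_block_const:
  assumes i: "i < n" and i': "i' < k"
  shows "(corona_link n m b * mat (n * m) k (\<lambda>(q,i'). g (q div m) i')) $$ (i,i')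
    = real m * (\<Sum>j<n. g j i') - 2 * b * real m * g i i'"
proof -
  have "(corona_link n m b * mat (n * m) k (\<lambda>(q,i'). g (q div m) i')) $$ (i,i')
      = (\<Sum>j<n. g j i' * (\<Sum>x<m. corona_link n m b $$ (i, j * m + x)))"
    by (rule index_mult_block_const_mat[OF corona_link_carrier i i'])
  also have "\<dots> = (\<Sum>j<n. g j i' * (real m - (if j = i then 2 * b * real m else 0)))"
    using i by (intro sum.cong refl) (simp add: corona_link_block_sum)
  also have "\<dots> = (\<Sum>j<n. g j i' * real m - (if j = i then 2 * b * real m * g j i' else 0))"
    by (intro sum.cong refl) (simp add: algebra_simps)
  also have "\<dots> = real m * (\<Sum>j<n. g j i') - 2 * b * real m * g i i'"
    using i by (simp add: sum_subtractf sum_distrib_left mult.commute)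
  finally show ?thesis .
qed

locale corona_blocks =
  fixes n m :: nat and c w :: real and S :: "nat \<Rightarrow> real mat"
  assumes S: "\<And>j. j < n \<Longrightarrow> S j \<in> carrier_mat m m"
    and S_row_sum: "\<And>j x. j < n \<Longrightarrow> x < m \<Longrightarrow> (\<Sum>y<m. S j $$ (x,y)) = w"
begin

lemma corona_pendant_block_sum:
  assumes q: "q < n * m" and j: "j < n"
  shows "(\<Sum>x<m. (corona_pendant n m c S - \<mu> \<cdot>\<^sub>m 1\<^sub>m (n * m)) $$ (q, j * m + x))
    = real m + (if j = q div m then w - 2 * c * (real m - 1) - real m - \<mu> else 0)"
proof (cases "j = q div m")
  case True
  have q_bounds: "q div m < n" "q mod m < m"
    using block_index_bounds[OF q] by auto
  have "(\<Sum>x<m. (corona_pendant n m c S - \<mu> \<cdot>\<^sub>m 1\<^sub>m (n * m)) $$ (q, j * m + x))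
      = (\<Sum>x<m. S (q div m) $$ (q mod m, x) - 2 * c + (if x = q mod m then 2 * c - \<mu> else 0))"
  proof (intro sum.cong refl)
    fix x assume "x \<in> {..<m}"
    then have "j * m + x < n * m" "(j * m + x) div m = j" "(j * m + x) mod m = x"
      using j by (auto simp: True block_index_less)
    then show "(corona_pendant n m c S - \<mu> \<cdot>\<^sub>m 1\<^sub>m (n * m)) $$ (q, j * m + x)
        = S (q div m) $$ (q mod m, x) - 2 * c + (if x = q mod m then 2 * c - \<mu> else 0)"
      using q True eq_iff_same_block[of q "j * m + x" m] by (auto simp: corona_pendant_def)
  qed
  also have "\<dots> = (\<Sum>x<m. S (q div m) $$ (q mod m, x)) - 2 * c * real m + (2 * c - \<mu>)"
    using q_bounds by (simp add: sum.distrib sum_subtractf)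
  also have "\<dots> = w - 2 * c * (real m - 1) - \<mu>"
    using S_row_sum q_bounds by (simp add: algebra_simps)
  finally show ?thesis using True by simp
next
  case False
  have "(corona_pendant n m c S - \<mu> \<cdot>\<^sub>m 1\<^sub>m (n * m)) $$ (q, j * m + x) = 1" if "x < m" for x
  proof -
    have "j * m + x < n * m" "(j * m + x) div m = j"
      using that j by (auto simp: block_index_less)
    then show ?thesis using q False by (auto simp: corona_pendant_def)
  qed
  then show ?thesis using False by simp
qed

lemma index_corona_pendant_mult_block_const:
  assumes q: "q < n * m" and i': "i' < k"
  shows "((corona_pendant n m c S - \<mu> \<cdot>\<^sub>m 1\<^sub>m (n * m)) * mat (n * m) k (\<lambda>(q,i'). g (q div m) i')) $$ (q,i')
    = real m * (\<Sum>j<n. g j i') + (w - 2 * c * (real m - 1) - real m - \<mu>) * g (q div m) i'"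
proof -
  have P: "corona_pendant n m c S - \<mu> \<cdot>\<^sub>m 1\<^sub>m (n * m) \<in> carrier_mat (n * m) (n * m)"
    by (simp add: minus_carrier_mat)
  have "((corona_pendant n m c S - \<mu> \<cdot>\<^sub>m 1\<^sub>m (n * m)) * mat (n * m) k (\<lambda>(q,i'). g (q div m) i')) $$ (q,i')
      = (\<Sum>j<n. g j i' * (\<Sum>x<m. (corona_pendant n m c S - \<mu> \<cdot>\<^sub>m 1\<^sub>m (n * m)) $$ (q, j * m + x)))"
    by (rule index_mult_block_const_mat[OF P q i'])
  also have "\<dots> = (\<Sum>j<n. g j i' * (real m + (if j = q div m then w - 2 * c * (real m - 1) - real m - \<mu> else 0)))"
    by (intro sum.cong refl) (simp add: corona_pendant_block_sum[OF q])
  also have "\<dots> = (\<Sum>j<n. g j i' * real m + (if j = q div m then (w - 2 * c * (real m - 1) - real m - \<mu>) * g j i' else 0))"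
    by (intro sum.cong refl) (simp add: algebra_simps)
  also have "\<dots> = real m * (\<Sum>j<n. g j i') + (w - 2 * c * (real m - 1) - real m - \<mu>) * g (q div m) i'"
    using block_index_bounds(1)[OF q] by (simp add: sum.distrib sum_distrib_left mult.commute)
  finally show ?thesis .
qed

lemma corona_pendant_minus_diag:
  "corona_pendant n m c S - \<mu> \<cdot>\<^sub>m 1\<^sub>m (n * m)
    = mat (n * m) (n * m) (\<lambda>(q,q'). if q div m = q' div m
        then (S (q div m) - (\<mu> - 2 * c) \<cdot>\<^sub>m 1\<^sub>m m + (- (2 * c + 1)) \<cdot>\<^sub>m mat m m (\<lambda>_. 1)) $$ (q mod m, q' mod m)
        else 0)
      + mat (n * m) (n * m) (\<lambda>_. 1)"
  (is "_ = ?B")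
proof (rule eq_matI)
  fix q q' assume "q < dim_row ?B" "q' < dim_col ?B"
  then have q: "q < n * m" and q': "q' < n * m" by simp_all
  have S_q: "S (q div m) \<in> carrier_mat m m"
    using S block_index_bounds(1)[OF q] by simp
  show "(corona_pendant n m c S - \<mu> \<cdot>\<^sub>m 1\<^sub>m (n * m)) $$ (q,q') = ?B $$ (q,q')"
  proof (cases "q div m = q' div m")
    case True
    then have "q = q' \<longleftrightarrow> q mod m = q' mod m"
      using eq_iff_same_block by blast
    then show ?thesis
      using q q' True S_q block_index_bounds[OF q] block_index_bounds[OF q']
      by (simp add: corona_pendant_def)
  next
    case False
    then show ?thesis
      using q q' by (auto simp: corona_pendant_def)
  qed
qed (simp_all add: corona_pendant_def)

lemma det_corona_pendant:
  fixes ev :: "nat \<Rightarrow> nat \<Rightarrow> real"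
  assumes h: "h = w - 2 * c * (real m - 1) - real m - \<mu>"
    and eig: "\<And>j x. j < n \<Longrightarrow> charP (S j) x = (\<Prod>i=1..m. ev j i - x)"
    and eig1: "\<And>j. j < n \<Longrightarrow> ev j 1 = w"
    and m: "1 \<le> m" and generic: "\<mu> - 2 * c \<noteq> w"
  shows "h * det (corona_pendant n m c S - \<mu> \<cdot>\<^sub>m 1\<^sub>m (n * m))
    = (h + real (n * m)) * (\<Prod>j<n. h * (\<Prod>i=2..m. ev j i + 2 * c - \<mu>))"
proof -
  define J :: "nat \<Rightarrow> real mat" where "J k = mat k k (\<lambda>_. 1)" for k
  define R where "R j = S j - (\<mu> - 2 * c) \<cdot>\<^sub>m 1\<^sub>m m + (- (2 * c + 1)) \<cdot>\<^sub>m J m" for j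
  define Rblk where "Rblk = mat (n * m) (n * m) (\<lambda>(q,q').
    if q div m = q' div m then R (q div m) $$ (q mod m, q' mod m) else 0)"
  define Q where "Q = corona_pendant n m c S - \<mu> \<cdot>\<^sub>m 1\<^sub>m (n * m)"
  have R: "R j \<in> carrier_mat m m" if "j < n" for j
    using S[OF that] by (simp add: R_def J_def minus_carrier_mat)
  have "1 \<cdot>\<^sub>m J (n * m) = J (n * m)"
    by (rule eq_matI) (simp_all add: J_def)
  then have Q_split: "Q = Rblk + 1 \<cdot>\<^sub>m J (n * m)"
    unfolding Q_def Rblk_def R_def J_def by (simp add: corona_pendant_minus_diag)
  have Rblk: "Rblk \<in> carrier_mat (n * m) (n * m)"
    by (simp add: Rblk_def)
  have Rblk_row_sum: "(\<Sum>q'<n * m. Rblk $$ (q,q')) = h" if q: "q < n * m" for q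
  proof -
    have "(\<Sum>q'<n * m. Q $$ (q,q')) = (\<Sum>j<n. real m + (if j = q div m then h else 0))"
      unfolding sum_blocks Q_def using q h by (intro sum.cong refl) (simp add: corona_pendant_block_sum)
    also have "\<dots> = real (n * m) + h"
      using block_index_bounds[OF q] by (simp add: sum.distrib)
    moreover have "Q $$ (q,q') = Rblk $$ (q,q') + 1" if "q' < n * m" for q'
      using q that Rblk by (simp add: Q_split J_def)
    ultimately show ?thesis
      by (simp add: sum.distrib)
  qed
  have "h * det Q = det Rblk * (h + real (n * m))"
    using det_add_const[OF Rblk Rblk_row_sum, of 1] by (simp add: Q_split J_def)
  also have "det Rblk = (\<Prod>j<n. det (mat m m (\<lambda>(x,y). R j $$ (x,y))))"
    unfolding Rblk_def by (rule det_block_diagonal)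
  also have "\<dots> = (\<Prod>j<n. h * (\<Prod>i=2..m. ev j i + 2 * c - \<mu>))"
  proof (rule prod.cong)
    fix j assume "j \<in> {..<n}"
    then have j: "j < n" by simp
    have "mat m m (\<lambda>(x,y). R j $$ (x,y)) = R j"
      using R[OF j] by (intro eq_matI) auto
    also have "det (R j) = (w - (\<mu> - 2 * c) + (- (2 * c + 1)) * real m) * (\<Prod>i=2..m. ev j i - (\<mu> - 2 * c))"
      unfolding R_def J_def
      by (rule det_shift_add_const[OF S[OF j] S_row_sum[OF j] eig[OF j] eig1[OF j] m generic])
    finally show "det (mat m m (\<lambda>(x,y). R j $$ (x,y))) = h * (\<Prod>i=2..m. ev j i + 2 * c - \<mu>)"
      unfolding h by (simp add: algebra_simps)
  qed simp
  finally show ?thesis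
    unfolding Q_def by (simp add: mult.commute)
qed

lemma det_corona_seidel_elim:
  fixes a b d \<mu> h :: real and S0 :: "real mat"
  assumes S0: "S0 \<in> carrier_mat n n"
    and h: "h = w - 2 * c * (real m - 1) - real m - \<mu>"
    and ah: "a * (h + real (n * m)) + real m * d = - 1" and dh: "d * h = 2 * b"
  shows "det (corona_seidel n m b c S0 S - \<mu> \<cdot>\<^sub>m 1\<^sub>m (n + n * m))
    = det (S0 - (\<mu> + 2 * b * real m * d) \<cdot>\<^sub>m 1\<^sub>m n
        + (real m * (real n * a + d) - 2 * b * real m * a) \<cdot>\<^sub>m mat n n (\<lambda>_. 1))
      * det (corona_pendant n m c S - \<mu> \<cdot>\<^sub>m 1\<^sub>m (n * m))"
proof -
  define L where "L = corona_link n m b"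
  define P where "P = corona_pendant n m c S - \<mu> \<cdot>\<^sub>m 1\<^sub>m (n * m)"
  \<comment> \<open>\<open>G\<close> adds \<open>g j i'\<close> times the column sum of pendant block \<open>j\<close> to hub column \<open>i'\<close>;
    the two equations on \<open>a\<close> and \<open>d\<close> say that this clears the lower-left block.\<close>
  define g where "g j i' = a + (if j = i' then d else 0)" for j i' :: nat
  define G where "G = mat (n * m) n (\<lambda>(q,i'). g (q div m) i')"
  have L: "L \<in> carrier_mat n (n * m)" and P: "P \<in> carrier_mat (n * m) (n * m)"
    and G: "G \<in> carrier_mat (n * m) n"
    by (simp_all add: L_def P_def G_def corona_link_carrier minus_carrier_mat)
  have g_sum: "(\<Sum>j<n. g j i') = real n * a + d" if "i' < n" for i'
    using that by (simp add: g_def sum.distrib)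
  have elim: "transpose_mat L + P * G = 0\<^sub>m (n * m) n"
  proof (rule eq_matI)
    fix q i' assume "q < dim_row (0\<^sub>m (n * m) n :: real mat)" "i' < dim_col (0\<^sub>m (n * m) n :: real mat)"
    then have q: "q < n * m" and i': "i' < n" by simp_all
    have "(P * G) $$ (q,i') = real m * (\<Sum>j<n. g j i') + h * g (q div m) i'"
      unfolding P_def G_def h by (rule index_corona_pendant_mult_block_const[OF q i'])
    also have "\<dots> = real m * (real n * a + d) + h * (a + (if q div m = i' then d else 0))"
      by (simp only: g_sum[OF i']) (simp add: g_def)
    also have "\<dots> = (if q div m = i' then 2 * b else 0) - 1"
      using ah dh by (auto simp: algebra_simps)
    finally show "(transpose_mat L + P * G) $$ (q,i') = 0\<^sub>m (n * m) n $$ (q,i')"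
      using L P G q i' by (simp add: L_def corona_link_def)
  qed (use L P G in auto)
  have LG: "S0 - \<mu> \<cdot>\<^sub>m 1\<^sub>m n + L * G = S0 - (\<mu> + 2 * b * real m * d) \<cdot>\<^sub>m 1\<^sub>m n
      + (real m * (real n * a + d) - 2 * b * real m * a) \<cdot>\<^sub>m mat n n (\<lambda>_. 1)"
  proof (rule eq_matI)
    fix i i' assume "i < dim_row (S0 - (\<mu> + 2 * b * real m * d) \<cdot>\<^sub>m 1\<^sub>m n
      + (real m * (real n * a + d) - 2 * b * real m * a) \<cdot>\<^sub>m mat n n (\<lambda>_. 1))"
      "i' < dim_col (S0 - (\<mu> + 2 * b * real m * d) \<cdot>\<^sub>m 1\<^sub>m n
      + (real m * (real n * a + d) - 2 * b * real m * a) \<cdot>\<^sub>m mat n n (\<lambda>_. 1))"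
    then have i: "i < n" and i': "i' < n" by simp_all
    have "(L * G) $$ (i,i') = real m * (\<Sum>j<n. g j i') - 2 * b * real m * g i i'"
      unfolding L_def G_def by (rule index_corona_link_mult_block_const[OF i i'])
    also have "\<dots> = real m * (real n * a + d) - 2 * b * real m * (a + (if i = i' then d else 0))"
      by (simp only: g_sum[OF i']) (simp add: g_def)
    finally show "(S0 - \<mu> \<cdot>\<^sub>m 1\<^sub>m n + L * G) $$ (i,i') = (S0 - (\<mu> + 2 * b * real m * d) \<cdot>\<^sub>m 1\<^sub>m n
      + (real m * (real n * a + d) - 2 * b * real m * a) \<cdot>\<^sub>m mat n n (\<lambda>_. 1)) $$ (i,i')"
      using S0 L G i i' by (auto simp del: index_mult_mat(1) simp: algebra_simps)
  qed (use S0 L G in auto)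
  have "det (four_block_mat (S0 - \<mu> \<cdot>\<^sub>m 1\<^sub>m n) L (transpose_mat L) P) = det (S0 - \<mu> \<cdot>\<^sub>m 1\<^sub>m n + L * G) * det P"
    by (rule det_block_elimination[OF _ L _ P G elim]) (use S0 L in \<open>auto simp: minus_carrier_mat\<close>)
  then show ?thesis
    using S0 L LG
    by (simp add: corona_seidel_def four_block_mat_minus_diag corona_pendant_carrier L_def P_def)
qed

lemma charP_corona_seidel_generic:
  fixes b v \<mu> h :: real and S0 :: "real mat" and ev0 :: "nat \<Rightarrow> real" and ev :: "nat \<Rightarrow> nat \<Rightarrow> real"
  assumes S0: "S0 \<in> carrier_mat n n" and S0_row_sum: "\<And>i. i < n \<Longrightarrow> (\<Sum>j<n. S0 $$ (i,j)) = v"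
    and eig0: "\<And>x. charP S0 x = (\<Prod>i=1..n. ev0 i - x)" and eig0_1: "ev0 1 = v"
    and eig: "\<And>j x. j < n \<Longrightarrow> charP (S j) x = (\<Prod>i=1..m. ev j i - x)"
    and eig_1: "\<And>j. j < n \<Longrightarrow> ev j 1 = w"
    and n: "1 \<le> n" and m: "1 \<le> m"
    and h: "h = w - 2 * c * (real m - 1) - real m - \<mu>"
    and h0: "h \<noteq> 0" and hnm: "h + real (n * m) \<noteq> 0" and generic_w: "\<mu> - 2 * c \<noteq> w"
    and generic_v: "(v - \<mu>) * h \<noteq> 4 * real m * b^2"
  shows "charP (corona_seidel n m b c S0 S) \<mu>
    = ((v - \<mu>) * (h + real m * real n) + 4 * b * real m * (real n - b) - real m * (real n)^2)
      * (\<Prod>i=2..n. ev0 i * h - 4 * real m * b^2 - \<mu> * h)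
      * (\<Prod>j<n. \<Prod>i=2..m. ev j i + 2 * c - \<mu>)"
proof -
  define d where "d = 2 * b / h"
  define a where "a = - (1 + real m * d) / (h + real (n * m))"
  define \<nu> where "\<nu> = \<mu> + 2 * b * real m * d"
  define s where "s = real m * (real n * a + d) - 2 * b * real m * a"
  define K where "K = (v - \<mu>) * (h + real m * real n) + 4 * b * real m * (real n - b) - real m * (real n)^2"
  define Q where "Q = (\<Prod>j<n. \<Prod>i=2..m. ev j i + 2 * c - \<mu>)"
  have dh: "d * h = 2 * b"
    using h0 by (simp add: d_def)
  have ah: "a * (h + real (n * m)) = - 1 - real m * d"
    using hnm by (simp add: a_def)
  have h\<nu>: "h * \<nu> = h * \<mu> + 4 * real m * b^2"
    using dh by (simp add: \<nu>_def algebra_simps power2_eq_square)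
  have "\<nu> \<noteq> v"
    using h\<nu> generic_v by (auto simp: algebra_simps)
  have K: "(v - \<nu> + s * real n) * (h + real (n * m)) = K"
  proof -
    have "(v - \<nu> + s * real n) * (h + real (n * m))
        = (v - \<mu>) * (h + real (n * m)) - 2 * b * real m * (d * h) - 2 * b * real m * real m * real n * d
          + real n * real m * (real n * (a * (h + real (n * m))) + d * h + d * real n * real m)
          - 2 * b * real m * real n * (a * (h + real (n * m)))"
      by (simp add: \<nu>_def s_def algebra_simps)
    also have "\<dots> = K"
      unfolding ah dh by (simp add: K_def algebra_simps power2_eq_square)
    finally show ?thesis .
  qed
  have top: "h ^ (n - 1) * (\<Prod>i=2..n. ev0 i - \<nu>) = (\<Prod>i=2..n. ev0 i * h - 4 * real m * b^2 - \<mu> * h)"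
  proof -
    have "h ^ (n - 1) * (\<Prod>i=2..n. ev0 i - \<nu>) = (\<Prod>i=2..n. h * (ev0 i - \<nu>))"
      by (simp add: prod.distrib)
    also have "\<dots> = (\<Prod>i=2..n. ev0 i * h - 4 * real m * b^2 - \<mu> * h)"
      using h\<nu> by (intro prod.cong refl) (simp add: algebra_simps)
    finally show ?thesis .
  qed
  have "h * charP (corona_seidel n m b c S0 S) \<mu>
      = det (S0 - \<nu> \<cdot>\<^sub>m 1\<^sub>m n + s \<cdot>\<^sub>m mat n n (\<lambda>_. 1)) * (h * det (corona_pendant n m c S - \<mu> \<cdot>\<^sub>m 1\<^sub>m (n * m)))"
    using det_corona_seidel_elim[OF S0 h _ dh, of a] ah S0
    by (simp add: charP_def dim_row_corona_seidel \<nu>_def s_def)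
  also have "\<dots> = (v - \<nu> + s * real n) * (\<Prod>i=2..n. ev0 i - \<nu>) * ((h + real (n * m)) * (h ^ n * Q))"
    using det_shift_add_const[OF S0 S0_row_sum eig0 eig0_1 n \<open>\<nu> \<noteq> v\<close>]
      det_corona_pendant[OF h eig eig_1 m generic_w]
    by (simp add: Q_def prod.distrib)
  also have "\<dots> = h * (K * (h ^ (n - 1) * (\<Prod>i=2..n. ev0 i - \<nu>)) * Q)"
    using n by (simp add: K[symmetric] power_eq_if algebra_simps)
  finally show ?thesis
    using h0 unfolding top K_def Q_def by simp
qed

lemma charP_corona_seidel:
  fixes b v \<mu> h :: real and S0 :: "real mat" and ev0 :: "nat \<Rightarrow> real" and ev :: "nat \<Rightarrow> nat \<Rightarrow> real"
  assumes S0: "S0 \<in> carrier_mat n n" and S0_row_sum: "\<And>i. i < n \<Longrightarrow> (\<Sum>j<n. S0 $$ (i,j)) = v"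
    and eig0: "\<And>x. charP S0 x = (\<Prod>i=1..n. ev0 i - x)" and eig0_1: "ev0 1 = v"
    and eig: "\<And>j x. j < n \<Longrightarrow> charP (S j) x = (\<Prod>i=1..m. ev j i - x)"
    and eig_1: "\<And>j. j < n \<Longrightarrow> ev j 1 = w"
    and n: "1 \<le> n" and m: "1 \<le> m"
    and h: "h = w - 2 * c * (real m - 1) - real m - \<mu>"
  shows "charP (corona_seidel n m b c S0 S) \<mu>
    = ((v - \<mu>) * (h + real m * real n) + 4 * b * real m * (real n - b) - real m * (real n)^2)
      * (\<Prod>i=2..n. ev0 i * h - 4 * real m * b^2 - \<mu> * h)
      * (\<Prod>j<n. \<Prod>i=2..m. ev j i + 2 * c - \<mu>)"
proof -
  define C where "C = w - 2 * c * (real m - 1) - real m"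
  define G where "G y = ((v - y) * (C - y + real m * real n) + 4 * b * real m * (real n - b) - real m * (real n)^2)
      * (\<Prod>i=2..n. ev0 i * (C - y) - 4 * real m * b^2 - y * (C - y))
      * (\<Prod>j<n. \<Prod>i=2..m. ev j i + 2 * c - y)" for y
  define bad where "bad = {C} \<union> {C + real (n * m)} \<union> {w + 2 * c} \<union> {y. (v - y) * (C - y) = 4 * real m * b^2}"
  have "finite bad"
    by (simp add: bad_def finite_roots_quadratic)
  moreover have "charP (corona_seidel n m b c S0 S) y = G y" if "y \<notin> bad" for y
    using that unfolding G_def
    by (intro charP_corona_seidel_generic[OF S0 S0_row_sum eig0 eig0_1 eig eig_1 n m])
      (auto simp: bad_def C_def algebra_simps)
  moreover have "continuous (at \<mu>) G"
    unfolding G_def by (intro continuous_intros)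
  ultimately have "charP (corona_seidel n m b c S0 S) \<mu> = G \<mu>"
    using continuous_charP[OF corona_seidel_carrier[OF S0]] continuous_eq_off_finite by blast
  then show ?thesis
    by (simp add: G_def C_def h)
qed

end

section \<open>Seidel matrices of hypergraphs and the generalized corona\<close>

lemma dim_seidel_mat [simp]:
  "dim_row (seidel_mat E vs) = length vs" "dim_col (seidel_mat E vs) = length vs"
  by (simp_all add: seidel_mat_def adj_mat_def)

lemma index_seidel_mat:
  assumes "i < length vs" "j < length vs"
  shows "seidel_mat E vs $$ (i,j) = (if i = j then 0 else 1 - 2 * real (card {e\<in>E. vs ! i \<in> e \<and> vs ! j \<in> e}))"
  using assms by (simp add: seidel_mat_def adj_mat_def)

lemma charP_seidel_mat_reorder:
  assumes xs: "distinct xs" and ys: "distinct ys" and set_eq: "set xs = set ys"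
  shows "charP (seidel_mat E ys) \<mu> = charP (seidel_mat E xs) \<mu>"
proof -
  define N where "N = length xs"
  have len_xs: "length xs = N"
    by (simp add: N_def)
  have len_ys: "length ys = N"
    using distinct_card[OF xs] distinct_card[OF ys] set_eq by (simp add: N_def)
  have bij_xs: "bij_betw ((!) xs) {..<N} (set ys)" and bij_ys: "bij_betw ((!) ys) {..<N} (set ys)"
    using xs ys set_eq len_ys by (auto simp: N_def intro: bij_betw_nth)
  define p where "p i = (if i < N then the_inv_into {..<N} ((!) xs) (ys ! i) else i)" for i
  have "bij_betw (the_inv_into {..<N} ((!) xs) \<circ> (!) ys) {..<N} {..<N}"
    using bij_ys bij_betw_the_inv_into[OF bij_xs] by (rule bij_betw_trans)
  moreover have "p i = (the_inv_into {..<N} ((!) xs) \<circ> (!) ys) i" if "i \<in> {..<N}" for i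
    using that by (simp add: p_def)
  ultimately have "bij_betw p {..<N} {..<N}"
    using bij_betw_cong by blast
  then have perm: "p permutes {0..<N}"
    by (intro bij_imp_permutes) (simp_all add: p_def atLeast0LessThan)
  have xs_p: "xs ! p i = ys ! i" if "i < N" for i
    using that bij_ys by (simp add: p_def f_the_inv_into_f_bij_betw[OF bij_xs] bij_betwE)
  have p_less: "p i < N" if "i < N" for i
    using perm that by (simp add: permutes_in_image)
  have p_eq: "p i = p j \<longleftrightarrow> i = j" if "i < N" "j < N" for i j
    using that xs_p ys len_ys by (metis nth_eq_iff_index_eq)
  define A where "A = seidel_mat E xs - \<mu> \<cdot>\<^sub>m 1\<^sub>m N"
  have A: "A \<in> carrier_mat N N"
    by (simp add: A_def minus_carrier_mat)
  have "seidel_mat E ys - \<mu> \<cdot>\<^sub>m 1\<^sub>m N = mat N N (\<lambda>(i,j). A $$ (p i, p j))"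
    by (rule eq_matI) (auto simp: A_def len_xs len_ys index_seidel_mat p_less p_eq xs_p)
  then show ?thesis
    using det_permute_rows_cols[OF A perm] by (simp add: charP_def len_xs len_ys A_def)
qed

lemma sum_card_common_edges:
  assumes reg: "kr_regular k r V E" and x: "x \<in> V"
  shows "(\<Sum>u\<in>V - {x}. card {e\<in>E. x \<in> e \<and> u \<in> e}) = r * (k - 1)"
proof -
  have V: "finite V" and sub: "\<And>e. e \<in> E \<Longrightarrow> e \<subseteq> V" and size: "\<And>e. e \<in> E \<Longrightarrow> card e = k"
    and deg: "card {e\<in>E. x \<in> e} = r"
    using reg x by (auto simp: kr_regular_def k_uniform_def hypergraph_def)
  define Ex where "Ex = {e\<in>E. x \<in> e}"
  have "finite Ex"
    using V sub by (auto simp: Ex_def intro: finite_subset[of _ "Pow V"])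
  have "(\<Sum>u\<in>V - {x}. card {e\<in>E. x \<in> e \<and> u \<in> e}) = (\<Sum>u\<in>V - {x}. \<Sum>e\<in>Ex. of_bool (u \<in> e))"
  proof (intro sum.cong refl)
    fix u
    have "{e\<in>E. x \<in> e \<and> u \<in> e} = Ex \<inter> {e. u \<in> e}"
      by (auto simp: Ex_def)
    then show "card {e\<in>E. x \<in> e \<and> u \<in> e} = (\<Sum>e\<in>Ex. of_bool (u \<in> e))"
      using \<open>finite Ex\<close> by simp
  qed
  also have "\<dots> = (\<Sum>e\<in>Ex. \<Sum>u\<in>V - {x}. of_bool (u \<in> e))"
    by (rule sum.swap)
  also have "\<dots> = (\<Sum>e\<in>Ex. k - 1)"
  proof (intro sum.cong refl)
    fix e assume e: "e \<in> Ex"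
    then have "(V - {x}) \<inter> {u. u \<in> e} = e - {x}" "x \<in> e" "card e = k"
      using sub size by (auto simp: Ex_def)
    then show "(\<Sum>u\<in>V - {x}. of_bool (u \<in> e)) = k - 1"
      using V by simp
  qed
  finally show ?thesis
    using deg by (simp add: Ex_def)
qed

lemma seidel_mat_row_sum:
  assumes reg: "kr_regular k r V E" and k: "1 \<le> k" and vs: "distinct vs" "set vs = V" and i: "i < length vs"
  shows "(\<Sum>j<length vs. seidel_mat E vs $$ (i,j)) = real (length vs) - 1 - 2 * real r * (real k - 1)"
proof -
  define x where "x = vs ! i"
  have x: "x \<in> V"
    using vs i by (auto simp: x_def)
  have "finite V"
    using reg by (simp add: kr_regular_def k_uniform_def hypergraph_def)
  define g where "g u = (if u = x then 0 else 1 - 2 * real (card {e\<in>E. x \<in> e \<and> u \<in> e}))" for u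
  have "(\<Sum>j<length vs. seidel_mat E vs $$ (i,j)) = (\<Sum>j<length vs. g (vs ! j))"
    using vs i by (intro sum.cong refl) (auto simp: index_seidel_mat g_def x_def nth_eq_iff_index_eq)
  also have "\<dots> = sum g ((!) vs ` {..<length vs})"
    using vs by (intro sum.reindex[symmetric, unfolded comp_def]) (auto simp: inj_on_def nth_eq_iff_index_eq)
  also have "(!) vs ` {..<length vs} = V"
    using vs by (auto simp: in_set_conv_nth)
  also have "sum g V = (\<Sum>u\<in>V - {x}. 1 - 2 * real (card {e\<in>E. x \<in> e \<and> u \<in> e}))"
    using \<open>finite V\<close> x by (simp add: sum.remove g_def)
  also have "\<dots> = real (card (V - {x})) - 2 * real (\<Sum>u\<in>V - {x}. card {e\<in>E. x \<in> e \<and> u \<in> e})"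
    by (simp add: sum_subtractf sum_distrib_left)
  also have "\<dots> = real (card V) - 1 - 2 * real r * (real k - 1)"
    using \<open>finite V\<close> x card_gt_0_iff[of V] k
    by (simp only: sum_card_common_edges[OF reg x]) (auto simp: of_nat_diff)
  finally show ?thesis
    using distinct_card[OF vs(1)] vs(2) by simp
qed

lemma card_supersets_of_card:
  assumes W: "finite W" and F: "F \<subseteq> W"
  shows "card {e. e \<subseteq> W \<and> card e = k \<and> F \<subseteq> e}
    = (if card F \<le> k then (card W - card F) choose (k - card F) else 0)"
proof (cases "card F \<le> k")
  case True
  have "finite F" using F W by (rule finite_subset)
  have "bij_betw (\<lambda>e. e - F) {e. e \<subseteq> W \<and> card e = k \<and> F \<subseteq> e} {T. T \<subseteq> W - F \<and> card T = k - card F}"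
  proof (rule bij_betw_byWitness[where f' = "\<lambda>T. T \<union> F"])
    show "(\<lambda>T. T \<union> F) ` {T. T \<subseteq> W - F \<and> card T = k - card F} \<subseteq> {e. e \<subseteq> W \<and> card e = k \<and> F \<subseteq> e}"
    proof clarify
      fix T assume T: "T \<subseteq> W - F" "card T = k - card F"
      then have "finite T" using W by (meson finite_Diff finite_subset)
      then have "card (T \<union> F) = card T + card F" using T \<open>finite F\<close> by (subst card_Un_disjoint) auto
      then show "T \<union> F \<subseteq> W \<and> card (T \<union> F) = k \<and> F \<subseteq> T \<union> F" using T F True by auto
    qed
  qed (use \<open>finite F\<close> in \<open>auto simp: card_Diff_subset\<close>)
  then have "card {e. e \<subseteq> W \<and> card e = k \<and> F \<subseteq> e} = card (W - F) choose (k - card F)"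
    using W by (simp add: bij_betw_same_card n_subsets)
  then show ?thesis
    using True F \<open>finite F\<close> by (simp add: card_Diff_subset)
next
  case False
  have "card F \<le> card e" if "e \<subseteq> W" "F \<subseteq> e" for e
    using that W by (meson card_mono finite_subset)
  then have "{e. e \<subseteq> W \<and> card e = k \<and> F \<subseteq> e} = {}"
    using False by fastforce
  then show ?thesis
    using False by (simp only: card.empty) simp
qed

lemma binomial_pascal_diff:
  fixes m k :: nat
  assumes "2 \<le> m" "2 \<le> k"
  shows "real ((m - 1) choose (k - 2)) - real ((m - 2) choose (k - 2))
    = real (if 3 \<le> k then (m - 2) choose (k - 3) else 0)"
proof (cases "k = 2")
  case False
  then have "k - 2 = Suc (k - 3)" "m - 1 = Suc (m - 2)"
    using assms by simp_all
  then show ?thesis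
    using False assms by simp
qed simp

definition corona_vertices :: "'a list \<Rightarrow> nat \<Rightarrow> (nat \<Rightarrow> 'b list) \<Rightarrow> ('a + nat \<times> nat \<times> 'b) list" where
  "corona_vertices vs0 m ws =
     map Inl vs0 @ map (\<lambda>q. Inr (q div m + 1, 1, ws (q div m + 1) ! (q mod m))) [0..<length vs0 * m]"

locale corona_hypergraph =
  fixes k n m :: nat and E0 :: "'a set set" and vs0 :: "'a list"
    and VG :: "nat \<Rightarrow> 'b set" and EG :: "nat \<Rightarrow> 'b set set" and ws :: "nat \<Rightarrow> 'b list"
  assumes k: "2 \<le> k" and m: "2 \<le> m"
    and vs0: "distinct vs0" "length vs0 = n"
    and EG_sub: "\<And>i e. i \<in> {1..n} \<Longrightarrow> e \<in> EG i \<Longrightarrow> e \<subseteq> VG i"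
    and ws: "\<And>i. i \<in> {1..n} \<Longrightarrow> distinct (ws i) \<and> set (ws i) = VG i \<and> length (ws i) = m"
begin

lemma VG_finite: "i \<in> {1..n} \<Longrightarrow> finite (VG i)"
  using ws by (metis List.finite_set)

lemma VG_card: "i \<in> {1..n} \<Longrightarrow> card (VG i) = m"
  using ws distinct_card by metis

abbreviation corona_edges :: "('a + nat \<times> nat \<times> 'b) set set" where
  "corona_edges \<equiv> gen_corona_E k E0 n 1 (\<lambda>i. {vs0 ! (i - 1)}) VG EG"

abbreviation hub :: "nat \<Rightarrow> 'a + nat \<times> nat \<times> 'b" where
  "hub i \<equiv> Inl (vs0 ! (i - 1))"

abbreviation pendant :: "nat \<Rightarrow> ('a + nat \<times> nat \<times> 'b) set" where
  "pendant i \<equiv> (\<lambda>x. Inr (i, 1, x)) ` VG i"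

abbreviation star :: "nat \<Rightarrow> ('a + nat \<times> nat \<times> 'b) set" where
  "star i \<equiv> insert (hub i) (pendant i)"

lemma corona_edges_iff:
  "e \<in> corona_edges \<longleftrightarrow>
    (\<exists>e0\<in>E0. e = Inl ` e0)
  \<or> (\<exists>i\<in>{1..n}. \<exists>e'\<in>EG i. e = (\<lambda>x. Inr (i, 1, x)) ` e')
  \<or> (\<exists>i\<in>{1..n}. e \<subseteq> star i \<and> card e = k
      \<and> hub i \<in> e \<and> e \<inter> pendant i \<noteq> {})"
  by (auto simp: gen_corona_E_def corona_copy_def)

lemma finite_card_star:
  assumes "i \<in> {1..n}"
  shows "finite (star i)"
    and "card (star i) = m + 1"
proof -
  have "card (pendant i) = m"
    using VG_card[OF assms] by (simp add: card_image inj_on_def)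
  moreover have "finite (pendant i)" "hub i \<notin> pendant i"
    using VG_finite[OF assms] by auto
  ultimately show "finite (star i)"
    and "card (star i) = m + 1"
    by simp_all
qed

lemma card_common_edges_Inl_Inl:
  assumes "a \<noteq> a'"
  shows "card {e\<in>corona_edges. Inl a \<in> e \<and> Inl a' \<in> e} = card {e\<in>E0. a \<in> e \<and> a' \<in> e}"
proof -
  have "{e\<in>corona_edges. Inl a \<in> e \<and> Inl a' \<in> e} = image Inl ` {e\<in>E0. a \<in> e \<and> a' \<in> e}"
    using assms unfolding corona_edges_iff by blast
  moreover have "inj_on (image Inl) {e\<in>E0. a \<in> e \<and> a' \<in> e}"
    by (simp add: inj_on_def inj_image_eq_iff)
  ultimately show ?thesis
    using card_image by fastforce
qed

lemma common_edges_Inr_Inr_apart: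
  assumes "i \<noteq> i'"
  shows "{e\<in>corona_edges. Inr (i, 1, x) \<in> e \<and> Inr (i', 1, y) \<in> e} = {}"
  using assms unfolding corona_edges_iff by blast

lemma star_subset_in_corona_edges:
  assumes "i \<in> {1..n}" "y \<in> VG i" "e \<subseteq> star i" "card e = k"
    "hub i \<in> e" "Inr (i, 1, y) \<in> e"
  shows "e \<in> corona_edges"
  using assms unfolding corona_edges_iff by blast

lemma pendant_edge_in_corona_edges:
  assumes "i \<in> {1..n}" "e \<in> EG i"
  shows "(\<lambda>x. Inr (i, 1, x)) ` e \<in> corona_edges"
  using assms unfolding corona_edges_iff by blast

lemma card_common_edges_Inl_Inr:
  assumes i: "i \<in> {1..n}" and y: "y \<in> VG i"
  shows "card {e\<in>corona_edges. Inl a \<in> e \<and> Inr (i, 1, y) \<in> e}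
    = (if a = vs0 ! (i - 1) then (m - 1) choose (k - 2) else 0)"
proof -
  define F :: "('a + nat \<times> nat \<times> 'b) set" where "F = {Inl a, Inr (i, 1, y)}"
  have "{e\<in>corona_edges. Inl a \<in> e \<and> Inr (i, 1, y) \<in> e}
      = (if a = vs0 ! (i - 1) then {e. e \<subseteq> star i \<and> card e = k \<and> F \<subseteq> e} else {})"
  proof
    show "{e\<in>corona_edges. Inl a \<in> e \<and> Inr (i, 1, y) \<in> e}
      \<subseteq> (if a = vs0 ! (i - 1) then {e. e \<subseteq> star i \<and> card e = k \<and> F \<subseteq> e} else {})"
      unfolding corona_edges_iff F_def by auto
    show "(if a = vs0 ! (i - 1) then {e. e \<subseteq> star i \<and> card e = k \<and> F \<subseteq> e} else {})
      \<subseteq> {e\<in>corona_edges. Inl a \<in> e \<and> Inr (i, 1, y) \<in> e}"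
      using star_subset_in_corona_edges[OF i y] by (auto simp: F_def)
  qed
  moreover have "F \<subseteq> star i" if "a = vs0 ! (i - 1)"
    using that y by (auto simp: F_def)
  moreover have "card F = 2"
    by (simp add: F_def)
  ultimately show ?thesis
    using card_supersets_of_card[of "star i" F k] finite_card_star[OF i] k by simp
qed

lemma card_common_edges_Inr_Inr:
  assumes i: "i \<in> {1..n}" and x: "x \<in> VG i" and y: "y \<in> VG i" and xy: "x \<noteq> y"
  shows "card {e\<in>corona_edges. Inr (i, 1, x) \<in> e \<and> Inr (i, 1, y) \<in> e}
    = card {e\<in>EG i. x \<in> e \<and> y \<in> e} + (if 3 \<le> k then (m - 2) choose (k - 3) else 0)"
proof -
  define F :: "('a + nat \<times> nat \<times> 'b) set" where "F = {hub i, Inr (i, 1, x), Inr (i, 1, y)}"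
  define L :: "('a + nat \<times> nat \<times> 'b) set set" where "L = image (\<lambda>z. Inr (i, 1, z)) ` {e\<in>EG i. x \<in> e \<and> y \<in> e}"
  define R where "R = {e. e \<subseteq> star i \<and> card e = k \<and> F \<subseteq> e}"
  have "{e\<in>corona_edges. Inr (i, 1, x) \<in> e \<and> Inr (i, 1, y) \<in> e} = L \<union> R"
  proof
    show "{e\<in>corona_edges. Inr (i, 1, x) \<in> e \<and> Inr (i, 1, y) \<in> e} \<subseteq> L \<union> R"
      unfolding corona_edges_iff L_def R_def F_def by auto
    have "L \<subseteq> corona_edges"
      using pendant_edge_in_corona_edges[OF i] by (auto simp: L_def)
    moreover have "R \<subseteq> corona_edges"
      using star_subset_in_corona_edges[OF i y] by (auto simp: R_def F_def)
    ultimately show "L \<union> R \<subseteq> {e\<in>corona_edges. Inr (i, 1, x) \<in> e \<and> Inr (i, 1, y) \<in> e}"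
      by (auto simp: L_def R_def F_def)
  qed
  moreover have "L \<inter> R = {}"
    by (auto simp: L_def R_def F_def)
  moreover have "finite L"
  proof -
    have "EG i \<subseteq> Pow (VG i)" using EG_sub[OF i] by auto
    then show ?thesis using VG_finite[OF i] by (simp add: L_def finite_subset)
  qed
  moreover have "finite R"
    using finite_card_star(1)[OF i] by (simp add: R_def)
  moreover have "card L = card {e\<in>EG i. x \<in> e \<and> y \<in> e}"
    unfolding L_def by (rule card_image) (simp add: inj_on_def inj_image_eq_iff)
  moreover have "card R = (if 3 \<le> k then (m - 2) choose (k - 3) else 0)"
  proof -
    have "F \<subseteq> star i" "card F = 3"
      using x y xy by (auto simp: F_def)
    then show ?thesis
      using card_supersets_of_card[of "star i" F k] finite_card_star[OF i] by (simp add: R_def)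
  qed
  ultimately show ?thesis
    by (simp add: card_Un_disjoint)
qed

lemma length_corona_vertices: "length (corona_vertices vs0 m ws) = n + n * m"
  by (simp add: corona_vertices_def vs0)

lemma nth_corona_vertices_base: "i < n \<Longrightarrow> (corona_vertices vs0 m ws) ! i = Inl (vs0 ! i)"
  by (simp add: corona_vertices_def nth_append vs0)

lemma nth_corona_vertices_pendant:
  "q < n * m \<Longrightarrow> (corona_vertices vs0 m ws) ! (n + q) = Inr (q div m + 1, 1, ws (q div m + 1) ! (q mod m))"
  by (simp add: corona_vertices_def nth_append vs0)

lemma pendant_vertex_in_VG:
  assumes "q < n * m"
  shows "q div m + 1 \<in> {1..n}" and "ws (q div m + 1) ! (q mod m) \<in> VG (q div m + 1)"
proof -
  show j: "q div m + 1 \<in> {1..n}"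
    using block_index_bounds(1)[OF assms] by simp
  show "ws (q div m + 1) ! (q mod m) \<in> VG (q div m + 1)"
    using ws[OF j] block_index_bounds(2)[OF assms] by (metis nth_mem)
qed

lemma set_corona_vertices: "set (corona_vertices vs0 m ws) = gen_corona_V (set vs0) n 1 VG"
proof -
  have "set (corona_vertices vs0 m ws)
      = Inl ` set vs0 \<union> (\<lambda>q. Inr (q div m + 1, 1, ws (q div m + 1) ! (q mod m))) ` {..<n * m}"
    by (simp add: corona_vertices_def lessThan_atLeast0 vs0)
  also have "(\<lambda>q. Inr (q div m + 1, 1, ws (q div m + 1) ! (q mod m))) ` {..<n * m}
      = (\<Union>i\<in>{1..n}. (\<lambda>x. Inr (i, 1, x)) ` VG i)"
  proof (intro equalityI subsetI)
    fix z assume "z \<in> (\<lambda>q. Inr (q div m + 1, 1, ws (q div m + 1) ! (q mod m))) ` {..<n * m}"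
    then obtain q where q: "q < n * m" and z: "z = Inr (q div m + 1, 1, ws (q div m + 1) ! (q mod m))"
      by auto
    then show "z \<in> (\<Union>i\<in>{1..n}. (\<lambda>x. Inr (i, 1, x)) ` VG i)"
      using pendant_vertex_in_VG[OF q] by blast
  next
    fix z assume "z \<in> (\<Union>i\<in>{1..n}. (\<lambda>x. Inr (i, 1, x)) ` VG i)"
    then obtain i x where i: "i \<in> {1..n}" and x: "x \<in> VG i" and z: "z = Inr (i, 1, x)"
      by auto
    then obtain t where t: "t < m" "ws i ! t = x"
      using ws[OF i] by (metis in_set_conv_nth)
    have q: "(i - 1) * m + t < n * m" "((i - 1) * m + t) div m = i - 1" "((i - 1) * m + t) mod m = t"
      using i t block_index_less[of "i - 1" n t m] by auto
    then show "z \<in> (\<lambda>q. Inr (q div m + 1, 1, ws (q div m + 1) ! (q mod m))) ` {..<n * m}"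
      using i t z by (intro image_eqI[of _ _ "(i - 1) * m + t"]) auto
  qed
  finally show ?thesis
    by (simp add: gen_corona_V_def corona_copy_def)
qed

lemma distinct_corona_vertices: "distinct (corona_vertices vs0 m ws)"
proof -
  have "inj_on (\<lambda>q. Inr (q div m + 1, 1, ws (q div m + 1) ! (q mod m)) :: 'a + nat \<times> nat \<times> 'b) {0..<n * m}"
  proof (rule inj_onI)
    fix q q' assume q: "q \<in> {0..<n * m}" and q': "q' \<in> {0..<n * m}"
      and eq: "(Inr (q div m + 1, 1, ws (q div m + 1) ! (q mod m)) :: 'a + nat \<times> nat \<times> 'b)
        = Inr (q' div m + 1, 1, ws (q' div m + 1) ! (q' mod m))"
    then have same: "q div m = q' div m" by simp
    have "distinct (ws (q div m + 1))" "length (ws (q div m + 1)) = m"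
      using ws pendant_vertex_in_VG(1) q by auto
    then have "q mod m = q' mod m"
      using eq same block_index_bounds(2) q q' by (auto simp: nth_eq_iff_index_eq)
    then show "q = q'"
      using same eq_iff_same_block by blast
  qed
  then show ?thesis
    by (auto simp: corona_vertices_def distinct_map vs0)
qed

lemma seidel_corona_base:
  assumes "i < n" "i' < n"
  shows "seidel_mat corona_edges (corona_vertices vs0 m ws) $$ (i,i') = seidel_mat E0 vs0 $$ (i,i')"
proof (cases "i = i'")
  case False
  then have "vs0 ! i \<noteq> vs0 ! i'"
    using assms vs0 by (simp add: nth_eq_iff_index_eq)
  then show ?thesis
    using assms vs0 False card_common_edges_Inl_Inl
    by (simp add: index_seidel_mat length_corona_vertices nth_corona_vertices_base)
qed (use assms vs0 in \<open>simp add: index_seidel_mat length_corona_vertices\<close>)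

lemma seidel_corona_link:
  assumes i: "i < n" and q: "q < n * m"
  shows "seidel_mat corona_edges (corona_vertices vs0 m ws) $$ (i, n + q) = corona_link n m (real ((m - 1) choose (k - 2))) $$ (i,q)"
    and "seidel_mat corona_edges (corona_vertices vs0 m ws) $$ (n + q, i) = corona_link n m (real ((m - 1) choose (k - 2))) $$ (i,q)"
proof -
  have "vs0 ! i = vs0 ! (q div m + 1 - 1) \<longleftrightarrow> q div m = i"
    using i block_index_bounds(1)[OF q] vs0 by (auto simp: nth_eq_iff_index_eq)
  then have "card {e\<in>corona_edges. Inl (vs0 ! i) \<in> e \<and> Inr (q div m + 1, 1, ws (q div m + 1) ! (q mod m)) \<in> e}
      = (if q div m = i then (m - 1) choose (k - 2) else 0)"
    using card_common_edges_Inl_Inr[OF pendant_vertex_in_VG[OF q]] by simp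
  moreover have "{e\<in>corona_edges. Inr (q div m + 1, 1, ws (q div m + 1) ! (q mod m)) \<in> e \<and> Inl (vs0 ! i) \<in> e}
      = {e\<in>corona_edges. Inl (vs0 ! i) \<in> e \<and> Inr (q div m + 1, 1, ws (q div m + 1) ! (q mod m)) \<in> e}"
    by blast
  ultimately show "seidel_mat corona_edges (corona_vertices vs0 m ws) $$ (i, n + q) = corona_link n m (real ((m - 1) choose (k - 2))) $$ (i,q)"
    and "seidel_mat corona_edges (corona_vertices vs0 m ws) $$ (n + q, i) = corona_link n m (real ((m - 1) choose (k - 2))) $$ (i,q)"
    using i q by (simp_all add: index_seidel_mat length_corona_vertices nth_corona_vertices_base
        nth_corona_vertices_pendant corona_link_def)
qed

lemma seidel_corona_pendant:
  assumes q: "q < n * m" and q': "q' < n * m"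
  shows "seidel_mat corona_edges (corona_vertices vs0 m ws) $$ (n + q, n + q')
    = corona_pendant n m (real ((m - 1) choose (k - 2)) - real ((m - 2) choose (k - 2)))
        (\<lambda>j. seidel_mat (EG (j + 1)) (ws (j + 1))) $$ (q,q')"
proof -
  define j where "j = q div m + 1"
  define x where "x = ws j ! (q mod m)"
  define y where "y = ws j ! (q' mod m)"
  have j: "j \<in> {1..n}" and ws_j: "distinct (ws j)" "length (ws j) = m"
    using pendant_vertex_in_VG(1)[OF q] ws by (auto simp: j_def)
  have mods: "q mod m < m" "q' mod m < m"
    using block_index_bounds(2) q q' by auto
  show ?thesis
  proof (cases "q div m = q' div m")
    case False
    then have "q div m + 1 \<noteq> q' div m + 1"
      by simp
    from common_edges_Inr_Inr_apart[OF this]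
    have none: "{e\<in>corona_edges. (corona_vertices vs0 m ws) ! (n + q) \<in> e \<and> (corona_vertices vs0 m ws) ! (n + q') \<in> e} = {}"
      using q q' by (simp add: nth_corona_vertices_pendant)
    have "q \<noteq> q'"
      using False by auto
    then have "seidel_mat corona_edges (corona_vertices vs0 m ws) $$ (n + q, n + q')
        = 1 - 2 * real (card {e\<in>corona_edges. (corona_vertices vs0 m ws) ! (n + q) \<in> e \<and> (corona_vertices vs0 m ws) ! (n + q') \<in> e})"
      using q q' by (simp add: index_seidel_mat length_corona_vertices)
    also have "\<dots> = 1"
      by (simp only: none card.empty)
    finally show ?thesis
      using q q' False by (simp add: corona_pendant_def)
  next
    case True
    show ?thesis
    proof (cases "q = q'")
      case True
      then show ?thesis
        using q q' mods ws_j by (simp add: index_seidel_mat length_corona_vertices corona_pendant_def j_def)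
    next
      case False
      then have "q mod m \<noteq> q' mod m"
        using \<open>q div m = q' div m\<close> eq_iff_same_block by blast
      then have xy: "x \<noteq> y"
        using ws_j mods by (simp add: x_def y_def nth_eq_iff_index_eq)
      have xy_VG: "x \<in> VG j" "y \<in> VG j"
        using ws[OF j] mods nth_mem[of _ "ws j"] by (auto simp: x_def y_def)
      have common: "card {e\<in>corona_edges. Inr (j, 1, x) \<in> e \<and> Inr (j, 1, y) \<in> e}
          = card {e\<in>EG j. x \<in> e \<and> y \<in> e} + (if 3 \<le> k then (m - 2) choose (k - 3) else 0)"
        by (rule card_common_edges_Inr_Inr[OF j xy_VG xy])
      have "seidel_mat corona_edges (corona_vertices vs0 m ws) $$ (n + q, n + q')
          = 1 - 2 * real (card {e\<in>corona_edges. Inr (j, 1, x) \<in> e \<and> Inr (j, 1, y) \<in> e})"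
        using q q' False True
        by (simp add: index_seidel_mat length_corona_vertices nth_corona_vertices_pendant j_def x_def y_def)
      also have "\<dots> = (1 - 2 * real (card {e\<in>EG j. x \<in> e \<and> y \<in> e}))
          - 2 * (real ((m - 1) choose (k - 2)) - real ((m - 2) choose (k - 2)))"
        unfolding common binomial_pascal_diff[OF m k] by simp
      also have "1 - 2 * real (card {e\<in>EG j. x \<in> e \<and> y \<in> e}) = seidel_mat (EG j) (ws j) $$ (q mod m, q' mod m)"
        using mods ws_j \<open>q mod m \<noteq> q' mod m\<close> by (simp add: index_seidel_mat x_def y_def)
      finally show ?thesis
        using q q' False True by (simp add: corona_pendant_def j_def)
    qed
  qed
qed

lemma seidel_mat_corona:
  "seidel_mat corona_edges (corona_vertices vs0 m ws)
    = corona_seidel n m (real ((m - 1) choose (k - 2)))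
        (real ((m - 1) choose (k - 2)) - real ((m - 2) choose (k - 2)))
        (seidel_mat E0 vs0) (\<lambda>j. seidel_mat (EG (j + 1)) (ws (j + 1)))"
  (is "_ = corona_seidel n m ?b ?c ?B ?P")
proof (rule eq_matI)
  fix i i' assume "i < dim_row (corona_seidel n m ?b ?c ?B ?P)" "i' < dim_col (corona_seidel n m ?b ?c ?B ?P)"
  then have i: "i < n + n * m" and i': "i' < n + n * m"
    by (simp_all add: corona_seidel_def corona_pendant_def vs0)
  consider "i < n" "i' < n" | q' where "i < n" "i' = n + q'" "q' < n * m"
    | q where "i = n + q" "q < n * m" "i' < n" | q q' where "i = n + q" "q < n * m" "i' = n + q'" "q' < n * m"
    using i i' by (metis add_diff_inverse_nat add_less_cancel_left)
  then show "seidel_mat corona_edges (corona_vertices vs0 m ws) $$ (i,i') = corona_seidel n m ?b ?c ?B ?P $$ (i,i')"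
  proof cases
    case 1
    then show ?thesis
      using seidel_corona_base[OF 1] by (simp add: corona_seidel_def corona_pendant_def vs0)
  next
    case 2
    then show ?thesis
      using seidel_corona_link(1)[OF 2(1,3)] by (simp add: corona_seidel_def corona_pendant_def vs0)
  next
    case 3
    then show ?thesis
      using seidel_corona_link(2)[OF 3(3,2)] by (simp add: corona_seidel_def corona_pendant_def corona_link_def vs0)
  next
    case 4
    then show ?thesis
      using seidel_corona_pendant[OF 4(2,4)] by (simp add: corona_seidel_def corona_pendant_def vs0)
  qed
qed (simp_all add: length_corona_vertices corona_seidel_def corona_pendant_def vs0)

lemma charP_seidel_mat_corona:
  assumes "distinct zs" "set zs = gen_corona_V (set vs0) n 1 VG"
  shows "charP (seidel_mat corona_edges zs) \<mu>
    = charP (corona_seidel n m (real ((m - 1) choose (k - 2)))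
        (real ((m - 1) choose (k - 2)) - real ((m - 2) choose (k - 2)))
        (seidel_mat E0 vs0) (\<lambda>j. seidel_mat (EG (j + 1)) (ws (j + 1)))) \<mu>"
proof -
  have "charP (seidel_mat corona_edges zs) \<mu> = charP (seidel_mat corona_edges (corona_vertices vs0 m ws)) \<mu>"
    by (rule charP_seidel_mat_reorder[OF distinct_corona_vertices assms(1)]) (simp add: set_corona_vertices assms(2))
  then show ?thesis
    by (simp only: seidel_mat_corona)
qed

end

theorem theorem3p4:
  fixes k r0 r n m :: nat
    and V0 :: "'a set" and E0 :: "'a set set" and vs0 :: "'a list"
    and VG :: "nat \<Rightarrow> 'b set" and EG :: "nat \<Rightarrow> 'b set set" and ws :: "nat \<Rightarrow> 'b list"
    and mu0 :: "nat \<Rightarrow> real" and mu :: "nat \<Rightarrow> nat \<Rightarrow> real"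
    and zs :: "('a + nat \<times> nat \<times> 'b) list"
  assumes hk: "k \<ge> 2"
    and hn: "n \<ge> 1"
    and hm: "m \<ge> 2"
    and G0: "kr_regular k r0 V0 E0"
    and vs0: "distinct vs0" "set vs0 = V0" "length vs0 = n"
    and mu0_1: "mu0 1 = real n - 1 - 2 * real r0 * (real k - 1)"
    and mu0_eig: "\<forall>\<mu>. charP (seidel_mat E0 vs0) \<mu> = (\<Prod>i=1..n. mu0 i - \<mu>)"
    and Gj: "\<forall>j\<in>{1..n}. kr_regular k r (VG j) (EG j)"
    and ws: "\<forall>j\<in>{1..n}. distinct (ws j) \<and> set (ws j) = VG j \<and> length (ws j) = m"
    and mu_1: "\<forall>j\<in>{1..n}. mu j 1 = real m - 1 - 2 * real r * (real k - 1)"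
    and mu_eig: "\<forall>j\<in>{1..n}. \<forall>\<mu>. charP (seidel_mat (EG j) (ws j)) \<mu> = (\<Prod>i=1..m. mu j i - \<mu>)"
    and zs: "distinct zs" "set zs = gen_corona_V V0 n 1 VG"
  shows "\<forall>\<mu>::real.
    (let b = real ((m - 1) choose (k - 2));
         c = real ((m - 1) choose (k - 2)) - real ((m - 2) choose (k - 2));
         h = - (1 + 2 * real r * (real k - 1) + 2 * c * (real m - 1) + \<mu>)
     in charP (seidel_mat (gen_corona_E k E0 n 1 (\<lambda>i. {vs0 ! (i - 1)}) VG EG) zs) \<mu>
        = ((mu0 1 - \<mu>) * (h + real m * real n) + 4 * b * real m * (real n - b)
             - real m * (real n)^2)
          * (\<Prod>i=2..n. mu0 i * h - 4 * real m * b^2 - \<mu> * h)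
          * (\<Prod>j=1..n. \<Prod>i=2..m. mu j i + 2 * c - \<mu>))"
proof -
  define b where "b = real ((m - 1) choose (k - 2))"
  define c where "c = real ((m - 1) choose (k - 2)) - real ((m - 2) choose (k - 2))"
  define h where "h \<mu> = - (1 + 2 * real r * (real k - 1) + 2 * c * (real m - 1) + \<mu>)" for \<mu>
  define S where "S j = seidel_mat (EG (j + 1)) (ws (j + 1))" for j
  interpret G: corona_hypergraph k n m E0 vs0 VG EG ws
    using hk hm vs0 Gj ws by unfold_locales (auto simp: kr_regular_def k_uniform_def hypergraph_def)
  interpret B: corona_blocks n m c "real m - 1 - 2 * real r * (real k - 1)" S
  proof
    show "\<And>j. j < n \<Longrightarrow> S j \<in> carrier_mat m m"
      using ws by (auto simp: S_def carrier_matI)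
    show "\<And>j x. j < n \<Longrightarrow> x < m \<Longrightarrow> (\<Sum>y<m. S j $$ (x,y)) = real m - 1 - 2 * real r * (real k - 1)"
      using seidel_mat_row_sum[OF Gj[rule_format] _ conjunct1[OF ws[rule_format]]] ws hk by (simp add: S_def)
  qed
  have "charP (seidel_mat (gen_corona_E k E0 n 1 (\<lambda>i. {vs0 ! (i - 1)}) VG EG) zs) \<mu>
      = ((mu0 1 - \<mu>) * (h \<mu> + real m * real n) + 4 * b * real m * (real n - b) - real m * (real n)^2)
        * (\<Prod>i=2..n. mu0 i * h \<mu> - 4 * real m * b^2 - \<mu> * h \<mu>)
        * (\<Prod>j<n. \<Prod>i=2..m. mu (j + 1) i + 2 * c - \<mu>)" for \<mu>
    unfolding G.charP_seidel_mat_corona[OF zs[folded vs0(2)]] S_def[symmetric]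
    unfolding c_def[symmetric] unfolding b_def[symmetric]
  proof (rule B.charP_corona_seidel)
    show "\<And>i. i < n \<Longrightarrow> (\<Sum>j<n. seidel_mat E0 vs0 $$ (i,j)) = mu0 1"
      using seidel_mat_row_sum[OF G0 _ vs0(1,2)] hk vs0(3) mu0_1 by simp
  qed (use vs0 mu0_eig ws mu_eig mu_1 hn hm in \<open>auto simp: S_def h_def c_def algebra_simps carrier_matI\<close>)
  then show ?thesis
    by (simp add: Let_def b_def c_def h_def prod.atLeast1_atMost_eq)
qed

end
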